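(* Let $m\ge3$, $\mu\ge0$, and $c\in\mathbb{R}^m_{\ge0}$. For any demand vectors $d=(d_L,d_R)$ and $d'=(d'_L,d'_R)$ with $d_L,d'_L\in\Delta^L$ and $d_R,d'_R\in\Delta^R$, $$\mathrm{OPT}_\mu(d)\le\mathrm{OPT}_\mu(d')+\big(2\|c\|_\infty+66\mu\log m\big)\|d-d'\|_1+\mu m^{-30}.$$
   Context: $L,R$ are finite nonempty sets, $m=|L||R|$, and coordinates of $\mathbb{R}^m$ are indexed by pairs $(i,j)\in L\times R$. $\mathbf{B}\in\{0,1\}^{m\times(|L|+|R|)}$ is the unsigned edge-vertex incidence matrix of the complete bipartite graph on $L\cup R$: $\mathbf{B}_{(i,j),v}=1$ iff $v\in\{i,j\}$. $H(x)=\sum_i x_i\log x_i$ ($0\log0=0$, natural log). $\mathrm{OPT}_\mu(d)=\min_{x\in\Delta^m,\ \mathbf{B}^\top x=d}\ \langle c,x\rangle+\mu H(x)$. $\Delta^k$ denotes the probability simplex. *)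

theory Defs
  imports "HOL-Analysis.Analysis"
begin

definition xlogx :: "real \<Rightarrow> real" where
  "xlogx t = (if t = 0 then 0 else t * ln t)"

definition negent :: "'a set \<Rightarrow> 'b set \<Rightarrow> ('a \<times> 'b \<Rightarrow> real) \<Rightarrow> real" where
  "negent L R x = (\<Sum>e\<in>L \<times> R. xlogx (x e))"

definition in_simplex :: "'i set \<Rightarrow> ('i \<Rightarrow> real) \<Rightarrow> bool" where
  "in_simplex I p \<longleftrightarrow> (\<forall>i\<in>I. 0 \<le> p i) \<and> (\<Sum>i\<in>I. p i) = 1"

text \<open>Feasibility: x in the simplex over L x R and B^T x = d, where B is the unsigned
  edge-vertex incidence matrix of the complete bipartite graph; i.e. row sums equal d_L
  and column sums equal d_R.\<close>
definition feasible :: "'a set \<Rightarrow> 'b set \<Rightarrow> ('a \<Rightarrow> real) \<Rightarrow> ('b \<Rightarrow> real)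
     \<Rightarrow> ('a \<times> 'b \<Rightarrow> real) \<Rightarrow> bool" where
  "feasible L R dL dR x \<longleftrightarrow> in_simplex (L \<times> R) x
     \<and> (\<forall>i\<in>L. (\<Sum>j\<in>R. x (i, j)) = dL i)
     \<and> (\<forall>j\<in>R. (\<Sum>i\<in>L. x (i, j)) = dR j)"

definition objective :: "'a set \<Rightarrow> 'b set \<Rightarrow> ('a \<times> 'b \<Rightarrow> real) \<Rightarrow> real
     \<Rightarrow> ('a \<times> 'b \<Rightarrow> real) \<Rightarrow> real" where
  "objective L R c \<mu> x = (\<Sum>e\<in>L \<times> R. c e * x e) + \<mu> * negent L R x"

text \<open>OPT_mu(d): the minimum (attained: compact nonempty feasible set, continuous objective),
  written as the infimum of the objective over feasible points.\<close>
definition OPT :: "'a set \<Rightarrow> 'b set \<Rightarrow> ('a \<times> 'b \<Rightarrow> real) \<Rightarrow> real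
     \<Rightarrow> ('a \<Rightarrow> real) \<Rightarrow> ('b \<Rightarrow> real) \<Rightarrow> real" where
  "OPT L R c \<mu> dL dR = Inf (objective L R c \<mu> ` {x. feasible L R dL dR x})"

end

theory Submission
  imports Defs
begin

text \<open>Cap the rows of a plan \<open>x'\<close> for \<open>d'\<close> at \<open>dL\<close> and then its columns at \<open>dR\<close>. This
  gives \<open>z \<le> x'\<close> whose missing mass \<open>1 - \<Sum>z\<close> is at most \<open>\<parallel>d - d'\<parallel>\<^sub>1\<close>, and adding the
  outer product of the row and column deficits, divided by that mass, gives a plan \<open>x \<ge> z\<close> for
  \<open>d\<close>. An entry that loses mass \<open>h\<close> raises \<open>t ln t\<close> by at most
  \<open>-h ln h \<le> 64 h ln m + 2 m\<^sup>-\<^sup>3\<^sup>2\<close>; an entry that gains mass \<open>h\<close> raises \<open>t ln t\<close> by at most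
  \<open>h\<close> and the cost by at most \<open>\<parallel>c\<parallel>\<^sub>\<infinity> h\<close>. Summing over the \<open>m\<close> entries gives the bound.\<close>

lemma xlogx_ge_minus_one:
  assumes "0 \<le> t" shows "-1 \<le> xlogx t"
proof (cases "t = 0")
  case False
  then have t: "0 < t" using assms by simp
  have "- ln t \<le> inverse t - 1"
    using ln_le_minus_one[of "inverse t"] t by (simp add: ln_inverse)
  then have "t * (- ln t) \<le> t * (inverse t - 1)"
    using t by (intro mult_left_mono) auto
  then show ?thesis using t by (simp add: xlogx_def algebra_simps)
qed (simp add: xlogx_def)

lemma xlogx_add_le:
  assumes "0 \<le> u" "0 \<le> v" "u + v \<le> 1"
  shows "xlogx (u + v) \<le> xlogx u + v"
proof (cases "u = 0")
  case True
  have "v * ln v \<le> v" if "0 < v"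
  proof -
    have "v * ln v \<le> 0" using that assms True by (intro mult_nonneg_nonpos) auto
    then show ?thesis using that by linarith
  qed
  then show ?thesis using True assms by (cases "v = 0") (auto simp: xlogx_def)
next
  case False
  then have u: "0 < u" using assms by simp
  have "ln (u + v) - ln u \<le> v / u"
    using ln_le_minus_one[of "(u + v) / u"] u assms by (simp add: ln_div field_simps)
  then have "u * (ln (u + v) - ln u) \<le> v"
    using u by (simp add: field_simps)
  moreover have "v * ln (u + v) \<le> 0"
    using assms u by (intro mult_nonneg_nonpos) auto
  ultimately show ?thesis
    using u assms by (simp add: xlogx_def algebra_simps)
qed

lemma xlogx_diff_le:
  assumes "0 \<le> a" "a \<le> b" "b \<le> 1"
  shows "xlogx a - xlogx b \<le> - xlogx (b - a)"
proof (cases "a = 0 \<or> a = b")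
  case True
  then show ?thesis by (auto simp: xlogx_def)
next
  case False
  then have a: "0 < a" and h: "0 < b - a" using assms by auto
  have "a * ln a \<le> a * ln b" using a assms by (intro mult_left_mono) auto
  moreover have "(b - a) * ln (b - a) \<le> (b - a) * ln b"
    using h a by (intro mult_left_mono) auto
  moreover have "b * ln b = a * ln b + (b - a) * ln b" by (simp add: algebra_simps)
  ultimately have "a * ln a - b * ln b \<le> - ((b - a) * ln (b - a))" by linarith
  then show ?thesis using a h by (simp add: xlogx_def)
qed

lemma neg_xlogx_le_sqrt:
  assumes "0 \<le> h" shows "- xlogx h \<le> 2 * sqrt h"
proof (cases "h = 0")
  case False
  then have h: "0 < h" using assms by simp
  have "- ln h / 2 \<le> inverse (sqrt h) - 1"
    using ln_le_minus_one[of "inverse (sqrt h)"] h by (simp add: ln_inverse ln_sqrt)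
  then have "h * (- ln h) \<le> h * (2 * inverse (sqrt h))"
    using h by (intro mult_left_mono) auto
  also have "h * (2 * inverse (sqrt h)) = 2 * sqrt h"
    using h by (metis real_div_sqrt divide_inverse mult.left_commute less_imp_le)
  finally show ?thesis using h by (simp add: xlogx_def)
qed (simp add: xlogx_def)

text \<open>Either \<open>h \<ge> M^(-2k)\<close>, so that \<open>-ln h \<le> 2k ln M\<close>, or \<open>-h ln h \<le> 2 sqrt h < 2 M^(-k)\<close>.\<close>
lemma neg_xlogx_le:
  fixes M :: real and k :: nat
  assumes "0 \<le> h" "1 \<le> M"
  shows "- xlogx h \<le> 2 * real k * ln M * h + 2 * inverse (M ^ k)"
proof (cases "inverse (M ^ (2 * k)) \<le> h")
  case True
  moreover have "0 < inverse (M ^ (2 * k))" using assms by simp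
  ultimately have h: "0 < h" by linarith
  have "- ln h \<le> 2 * real k * ln M"
    using ln_le_cancel_iff[of "inverse (M ^ (2 * k))" h] True h assms
    by (simp add: ln_inverse ln_realpow)
  then have "h * (- ln h) \<le> h * (2 * real k * ln M)" using h by (intro mult_left_mono) auto
  then have "- xlogx h \<le> 2 * real k * ln M * h" using h by (simp add: xlogx_def algebra_simps)
  moreover have "0 \<le> inverse (M ^ k)" using assms by simp
  ultimately show ?thesis by linarith
next
  case False
  have "sqrt h \<le> sqrt (inverse (M ^ (2 * k)))" using False by simp
  also have "\<dots> = inverse (M ^ k)"
    using assms by (simp add: power_mult real_sqrt_inverse real_sqrt_power flip: power_mult_distrib)
  finally have "- xlogx h \<le> 2 * inverse (M ^ k)" using neg_xlogx_le_sqrt[OF assms(1)] by simp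
  moreover have "0 \<le> 2 * real k * ln M * h" using assms by simp
  ultimately show ?thesis by linarith
qed

lemma feasible_nonneg: "feasible L R dL dR x \<Longrightarrow> e \<in> L \<times> R \<Longrightarrow> 0 \<le> x e"
  by (auto simp: feasible_def in_simplex_def)

lemma feasible_le_one:
  assumes "finite L" "finite R" "feasible L R dL dR x" "e \<in> L \<times> R"
  shows "x e \<le> 1"
proof -
  have "x e \<le> (\<Sum>e\<in>L \<times> R. x e)"
    using assms by (intro member_le_sum) (auto simp: feasible_nonneg)
  then show ?thesis using assms(3) by (simp add: feasible_def in_simplex_def)
qed

lemma feasible_product:
  assumes "in_simplex L dL" "in_simplex R dR"
  shows "feasible L R dL dR (\<lambda>(i, j). dL i * dR j)"
  using assms
  by (auto simp: feasible_def in_simplex_def sum.cartesian_product'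
      simp flip: sum_distrib_left sum_distrib_right)

text \<open>If \<open>Z\<close> fits under the marginals \<open>dL\<close>, \<open>dR\<close>, the row deficits \<open>r\<close> and the column
  deficits \<open>q\<close> both have total mass \<open>s = 1 - \<Sum>Z\<close>, so \<open>Z + r q\<^sup>T / s\<close> is feasible.\<close>
lemma feasible_add_deficit_product:
  assumes fin: "finite L" "finite R"
    and dL: "in_simplex L dL" and dR: "in_simplex R dR"
    and Z0: "\<forall>e\<in>L \<times> R. 0 \<le> Z e"
    and row: "\<forall>i\<in>L. (\<Sum>j\<in>R. Z (i, j)) \<le> dL i"
    and col: "\<forall>j\<in>R. (\<Sum>i\<in>L. Z (i, j)) \<le> dR j"
  shows "\<exists>W. (\<forall>e\<in>L \<times> R. 0 \<le> W e) \<and> feasible L R dL dR (\<lambda>e. Z e + W e)"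
proof -
  define r where "r i = dL i - (\<Sum>j\<in>R. Z (i, j))" for i
  define q where "q j = dR j - (\<Sum>i\<in>L. Z (i, j))" for j
  define s where "s = 1 - (\<Sum>e\<in>L \<times> R. Z e)"
  define W where "W = (\<lambda>(i, j). r i * q j / s)"
  have r0: "\<forall>i\<in>L. 0 \<le> r i" and q0: "\<forall>j\<in>R. 0 \<le> q j"
    using row col by (auto simp: r_def q_def)
  have sum_r: "(\<Sum>i\<in>L. r i) = s" and sum_q: "(\<Sum>j\<in>R. q j) = s"
    using dL dR
    by (auto simp: r_def q_def s_def in_simplex_def sum_subtractf sum.cartesian_product'
        intro: sum.swap)
  have W0: "\<forall>e\<in>L \<times> R. 0 \<le> W e"
    using r0 q0 sum_r sum_nonneg[of L r] by (auto simp: W_def)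
  have W_row: "(\<Sum>j\<in>R. W (i, j)) = r i" if "i \<in> L" for i
  proof -
    have "(\<Sum>j\<in>R. W (i, j)) = r i * s / s"
      unfolding W_def by (simp add: sum_q flip: sum_divide_distrib sum_distrib_left)
    also have "\<dots> = r i"
      using r0 that fin sum_r sum_nonneg_eq_0_iff[of L r] by (cases "s = 0") auto
    finally show ?thesis .
  qed
  have W_col: "(\<Sum>i\<in>L. W (i, j)) = q j" if "j \<in> R" for j
  proof -
    have "(\<Sum>i\<in>L. W (i, j)) = q j * s / s"
      unfolding W_def by (simp add: sum_r mult.commute flip: sum_divide_distrib sum_distrib_left)
    also have "\<dots> = q j"
      using q0 that fin sum_q sum_nonneg_eq_0_iff[of R q] by (cases "s = 0") auto
    finally show ?thesis .
  qed
  have "(\<Sum>j\<in>R. Z (i, j) + W (i, j)) = dL i" if "i \<in> L" for i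
    using W_row[OF that] by (simp add: sum.distrib r_def)
  moreover have "(\<Sum>i\<in>L. Z (i, j) + W (i, j)) = dR j" if "j \<in> R" for j
    using W_col[OF that] by (simp add: sum.distrib q_def)
  ultimately have "feasible L R dL dR (\<lambda>e. Z e + W e)"
    using Z0 W0 dL by (auto simp: feasible_def in_simplex_def sum.cartesian_product')
  with W0 show ?thesis by blast
qed

text \<open>A row of total mass \<open>0\<close> stays \<open>0\<close> because \<open>x / 0 = 0\<close>.\<close>
definition cap_rows :: "'b set \<Rightarrow> ('a \<Rightarrow> 'b \<Rightarrow> real) \<Rightarrow> ('a \<Rightarrow> real) \<Rightarrow> 'a \<Rightarrow> 'b \<Rightarrow> real" where
  "cap_rows R P b i j = P i j * (min (\<Sum>k\<in>R. P i k) (b i) / (\<Sum>k\<in>R. P i k))"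

lemma cap_rows_bounds:
  assumes "\<forall>k\<in>R. 0 \<le> P i k" "0 \<le> b i" "j \<in> R"
  shows "0 \<le> cap_rows R P b i j \<and> cap_rows R P b i j \<le> P i j"
proof -
  define t where "t = min (\<Sum>k\<in>R. P i k) (b i) / (\<Sum>k\<in>R. P i k)"
  have "0 \<le> t" "t \<le> 1"
    using assms sum_nonneg[of R "P i"] by (auto simp: t_def divide_le_eq_1)
  moreover have "cap_rows R P b i j = P i j * t" by (simp add: cap_rows_def t_def)
  ultimately show ?thesis using assms by (simp add: mult_left_le)
qed

lemma sum_cap_rows:
  assumes "\<forall>k\<in>R. 0 \<le> P i k" "0 \<le> b i"
  shows "(\<Sum>j\<in>R. cap_rows R P b i j) = min (\<Sum>j\<in>R. P i j) (b i)"
proof -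
  define t where "t = min (\<Sum>k\<in>R. P i k) (b i) / (\<Sum>k\<in>R. P i k)"
  have "cap_rows R P b i j = P i j * t" for j by (simp add: cap_rows_def t_def)
  then have "(\<Sum>j\<in>R. cap_rows R P b i j) = (\<Sum>j\<in>R. P i j) * t"
    by (simp add: sum_distrib_right)
  then show ?thesis
    using assms sum_nonneg[of R "P i"] by (cases "(\<Sum>k\<in>R. P i k) = 0") (auto simp: t_def)
qed

lemma capped_plan:
  fixes L :: "'a set" and R :: "'b set"
  assumes dL: "in_simplex L dL" and dR: "in_simplex R dR"
    and dL': "in_simplex L dL'" and dR': "in_simplex R dR'"
    and x': "feasible L R dL' dR' x'"
  shows "\<exists>z. (\<forall>e\<in>L \<times> R. 0 \<le> z e \<and> z e \<le> x' e)
    \<and> (\<forall>i\<in>L. (\<Sum>j\<in>R. z (i, j)) \<le> dL i) \<and> (\<forall>j\<in>R. (\<Sum>i\<in>L. z (i, j)) \<le> dR j)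
    \<and> 1 - (\<Sum>e\<in>L \<times> R. z e) \<le> (\<Sum>i\<in>L. \<bar>dL i - dL' i\<bar>) + (\<Sum>j\<in>R. \<bar>dR j - dR' j\<bar>)"
proof -
  define Y where "Y = cap_rows R (\<lambda>i j. x' (i, j)) dL"
  define Z where "Z i j = cap_rows L (\<lambda>j i. Y i j) dR j i" for i j
  have x'0: "0 \<le> x' (i, j)" if "i \<in> L" "j \<in> R" for i j
    using x' that by (simp add: feasible_nonneg)
  have x'_row: "\<forall>i\<in>L. (\<Sum>j\<in>R. x' (i, j)) = dL' i"
    and x'_col: "\<forall>j\<in>R. (\<Sum>i\<in>L. x' (i, j)) = dR' j"
    using x' by (auto simp: feasible_def)
  have dL0: "\<forall>i\<in>L. 0 \<le> dL i" and dR0: "\<forall>j\<in>R. 0 \<le> dR j"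
    using dL dR by (auto simp: in_simplex_def)
  have Y: "0 \<le> Y i j \<and> Y i j \<le> x' (i, j)" if "i \<in> L" "j \<in> R" for i j
    using cap_rows_bounds[of R "\<lambda>i j. x' (i, j)" i dL j] x'0 dL0 that by (simp add: Y_def)
  have Y_row: "(\<Sum>j\<in>R. Y i j) = min (dL' i) (dL i)" if "i \<in> L" for i
    using sum_cap_rows[of R "\<lambda>i j. x' (i, j)" i dL] x'0 dL0 x'_row that by (simp add: Y_def)
  have Y_col: "(\<Sum>i\<in>L. Y i j) \<le> dR' j" if "j \<in> R" for j
    using Y that x'_col sum_mono[of L "\<lambda>i. Y i j" "\<lambda>i. x' (i, j)"] by simp
  have Z: "0 \<le> Z i j \<and> Z i j \<le> Y i j" if "i \<in> L" "j \<in> R" for i j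
    using cap_rows_bounds[of L "\<lambda>j i. Y i j" j dR i] Y dR0 that by (simp add: Z_def)
  have Z_col: "(\<Sum>i\<in>L. Z i j) = min (\<Sum>i\<in>L. Y i j) (dR j)" if "j \<in> R" for j
    using sum_cap_rows[of L "\<lambda>j i. Y i j" j dR] Y dR0 that by (simp add: Z_def)
  have Z_row: "(\<Sum>j\<in>R. Z i j) \<le> dL i" if "i \<in> L" for i
    using Z that Y_row[OF that] sum_mono[of R "\<lambda>j. Z i j" "\<lambda>j. Y i j"] by simp
  have "1 - (\<Sum>(i, j)\<in>L \<times> R. Z i j) = (\<Sum>j\<in>R. dR j - min (\<Sum>i\<in>L. Y i j) (dR j))"
    using dR Z_col sum.swap[of "\<lambda>i j. Z i j" R L]
    by (simp add: in_simplex_def sum_subtractf sum.cartesian_product')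
  also have "\<dots> \<le> (\<Sum>j\<in>R. \<bar>dR j - dR' j\<bar> + (dR' j - (\<Sum>i\<in>L. Y i j)))"
    using Y_col by (intro sum_mono) (smt (verit))
  also have "\<dots> = (\<Sum>j\<in>R. \<bar>dR j - dR' j\<bar>) + (\<Sum>i\<in>L. dL' i - min (dL' i) (dL i))"
    using dR' dL' Y_row sum.swap[of "\<lambda>i j. Y i j" R L]
    by (simp add: in_simplex_def sum.distrib sum_subtractf)
  also have "\<dots> \<le> (\<Sum>i\<in>L. \<bar>dL i - dL' i\<bar>) + (\<Sum>j\<in>R. \<bar>dR j - dR' j\<bar>)"
    using sum_mono[of L "\<lambda>i. dL' i - min (dL' i) (dL i)" "\<lambda>i. \<bar>dL i - dL' i\<bar>"] by auto
  finally show ?thesis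
    using Y Z Z_row Z_col dR0 by (intro exI[of _ "\<lambda>(i, j). Z i j"]) fastforce
qed

lemma feasible_transfer:
  fixes L :: "'a set" and R :: "'b set"
  assumes fin: "finite L" "finite R"
    and d: "in_simplex L dL" "in_simplex R dR" "in_simplex L dL'" "in_simplex R dR'"
    and x': "feasible L R dL' dR' x'"
  shows "\<exists>x z. feasible L R dL dR x \<and> (\<forall>e\<in>L \<times> R. 0 \<le> z e \<and> z e \<le> x' e \<and> z e \<le> x e)
    \<and> 1 - (\<Sum>e\<in>L \<times> R. z e) \<le> (\<Sum>i\<in>L. \<bar>dL i - dL' i\<bar>) + (\<Sum>j\<in>R. \<bar>dR j - dR' j\<bar>)"
proof -
  obtain z where z: "\<forall>e\<in>L \<times> R. 0 \<le> z e \<and> z e \<le> x' e"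
    and row: "\<forall>i\<in>L. (\<Sum>j\<in>R. z (i, j)) \<le> dL i" and col: "\<forall>j\<in>R. (\<Sum>i\<in>L. z (i, j)) \<le> dR j"
    and mass: "1 - (\<Sum>e\<in>L \<times> R. z e) \<le> (\<Sum>i\<in>L. \<bar>dL i - dL' i\<bar>) + (\<Sum>j\<in>R. \<bar>dR j - dR' j\<bar>)"
    using capped_plan[OF d x'] by auto
  obtain W where W0: "\<forall>e\<in>L \<times> R. 0 \<le> W e" and x: "feasible L R dL dR (\<lambda>e. z e + W e)"
    using feasible_add_deficit_product[OF fin d(1,2), where Z = z] z row col by auto
  have "\<forall>e\<in>L \<times> R. 0 \<le> z e \<and> z e \<le> x' e \<and> z e \<le> z e + W e"
    using z W0 by auto
  with x mass show ?thesis by (intro exI[of _ "\<lambda>e. z e + W e"] exI[of _ z]) auto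
qed

lemma objective_transfer_le:
  fixes M :: real and k :: nat
  assumes fin: "finite L" "finite R" and \<mu>: "0 \<le> \<mu>" and M: "1 \<le> M"
    and c: "\<forall>e\<in>L \<times> R. 0 \<le> c e \<and> c e \<le> C"
    and x: "feasible L R dL dR x" and x': "feasible L R dL' dR' x'"
    and z: "\<forall>e\<in>L \<times> R. 0 \<le> z e \<and> z e \<le> x' e \<and> z e \<le> x e"
  shows "objective L R c \<mu> x \<le> objective L R c \<mu> x'
    + (C + \<mu> * (1 + 2 * real k * ln M)) * (1 - (\<Sum>e\<in>L \<times> R. z e))
    + \<mu> * real (card (L \<times> R)) * (2 * inverse (M ^ k))"
proof -
  define s where "s = 1 - (\<Sum>e\<in>L \<times> R. z e)"
  have mass_x: "(\<Sum>e\<in>L \<times> R. x e - z e) = s" and mass_x': "(\<Sum>e\<in>L \<times> R. x' e - z e) = s"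
    using x x' by (simp_all add: s_def feasible_def in_simplex_def sum_subtractf)
  have cost_entry: "c e * x e \<le> c e * x' e + C * (x e - z e)" if e: "e \<in> L \<times> R" for e
  proof -
    have "c e * z e \<le> c e * x' e" using c z e by (intro mult_left_mono) auto
    moreover have "c e * (x e - z e) \<le> C * (x e - z e)" using c z e by (intro mult_right_mono) auto
    ultimately show ?thesis by (simp add: algebra_simps)
  qed
  have "(\<Sum>e\<in>L \<times> R. c e * x e) \<le> (\<Sum>e\<in>L \<times> R. c e * x' e + C * (x e - z e))"
    using cost_entry by (rule sum_mono)
  also have "\<dots> = (\<Sum>e\<in>L \<times> R. c e * x' e) + C * s"
    using mass_x by (simp add: sum.distrib flip: sum_distrib_left)
  finally have cost: "(\<Sum>e\<in>L \<times> R. c e * x e) \<le> (\<Sum>e\<in>L \<times> R. c e * x' e) + C * s" .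
  have entropy_entry: "xlogx (x e) \<le> xlogx (x' e) + (x e - z e)
      + (2 * real k * ln M * (x' e - z e) + 2 * inverse (M ^ k))" if e: "e \<in> L \<times> R" for e
  proof -
    have "xlogx (x e) \<le> xlogx (z e) + (x e - z e)"
      using xlogx_add_le[of "z e" "x e - z e"] z feasible_le_one[OF fin x e] e by auto
    moreover have "xlogx (z e) - xlogx (x' e) \<le> - xlogx (x' e - z e)"
      using xlogx_diff_le z feasible_le_one[OF fin x' e] e by blast
    moreover have "- xlogx (x' e - z e) \<le> 2 * real k * ln M * (x' e - z e) + 2 * inverse (M ^ k)"
      using neg_xlogx_le[of "x' e - z e" M k] z e M by simp
    ultimately show ?thesis by linarith
  qed
  have "negent L R x \<le> (\<Sum>e\<in>L \<times> R. xlogx (x' e) + (x e - z e)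
      + (2 * real k * ln M * (x' e - z e) + 2 * inverse (M ^ k)))"
    unfolding negent_def using entropy_entry by (rule sum_mono)
  also have "\<dots> = negent L R x' + s + 2 * real k * ln M * s
      + real (card (L \<times> R)) * (2 * inverse (M ^ k))"
    using mass_x mass_x' by (simp add: negent_def sum.distrib flip: sum_distrib_left)
  finally have "\<mu> * negent L R x \<le> \<mu> * (negent L R x' + s + 2 * real k * ln M * s
      + real (card (L \<times> R)) * (2 * inverse (M ^ k)))"
    using \<mu> by (intro mult_left_mono) auto
  with cost show ?thesis by (simp add: objective_def s_def algebra_simps)
qed

lemma objective_lower_bound:
  assumes "0 \<le> \<mu>" "\<forall>e\<in>L \<times> R. 0 \<le> c e" "feasible L R dL dR x"
  shows "- \<mu> * real (card (L \<times> R)) \<le> objective L R c \<mu> x"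
proof -
  have "0 \<le> (\<Sum>e\<in>L \<times> R. c e * x e)"
    using assms by (intro sum_nonneg) (auto simp: feasible_nonneg)
  moreover have "(\<Sum>e\<in>L \<times> R. -1) \<le> negent L R x"
    unfolding negent_def using assms xlogx_ge_minus_one by (intro sum_mono) (auto simp: feasible_nonneg)
  then have "\<mu> * - real (card (L \<times> R)) \<le> \<mu> * negent L R x"
    using assms by (intro mult_left_mono) auto
  ultimately show ?thesis by (simp add: objective_def)
qed

lemma OPT_le_objective:
  assumes "0 \<le> \<mu>" "\<forall>e\<in>L \<times> R. 0 \<le> c e" "feasible L R dL dR x"
  shows "OPT L R c \<mu> dL dR \<le> objective L R c \<mu> x"
  unfolding OPT_def using assms objective_lower_bound[OF assms(1,2)]
  by (intro cInf_lower bdd_belowI[of _ "- \<mu> * real (card (L \<times> R))"]) auto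

lemma le_OPT:
  assumes "in_simplex L dL" "in_simplex R dR"
    and "\<And>x. feasible L R dL dR x \<Longrightarrow> B \<le> objective L R c \<mu> x"
  shows "B \<le> OPT L R c \<mu> dL dR"
  unfolding OPT_def using assms feasible_product[OF assms(1,2)] by (intro cInf_greatest) auto

lemma OPT_le_OPT_other_marginals:
  fixes M :: real and k :: nat
  assumes fin: "finite L" "finite R" and \<mu>: "0 \<le> \<mu>" and M: "1 \<le> M"
    and c: "\<forall>e\<in>L \<times> R. 0 \<le> c e \<and> c e \<le> C"
    and d: "in_simplex L dL" "in_simplex R dR" "in_simplex L dL'" "in_simplex R dR'"
  shows "OPT L R c \<mu> dL dR \<le> OPT L R c \<mu> dL' dR'
    + (C + \<mu> * (1 + 2 * real k * ln M))
      * ((\<Sum>i\<in>L. \<bar>dL i - dL' i\<bar>) + (\<Sum>j\<in>R. \<bar>dR j - dR' j\<bar>))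
    + \<mu> * real (card (L \<times> R)) * (2 * inverse (M ^ k))"
proof -
  define A where "A = C + \<mu> * (1 + 2 * real k * ln M)"
  define \<delta> where "\<delta> = (\<Sum>i\<in>L. \<bar>dL i - dL' i\<bar>) + (\<Sum>j\<in>R. \<bar>dR j - dR' j\<bar>)"
  define \<epsilon> where "\<epsilon> = \<mu> * real (card (L \<times> R)) * (2 * inverse (M ^ k))"
  have "OPT L R c \<mu> dL dR - (A * \<delta> + \<epsilon>) \<le> objective L R c \<mu> x'"
    if x': "feasible L R dL' dR' x'" for x'
  proof -
    obtain x z where x: "feasible L R dL dR x"
      and z: "\<forall>e\<in>L \<times> R. 0 \<le> z e \<and> z e \<le> x' e \<and> z e \<le> x e"
      and mass: "1 - (\<Sum>e\<in>L \<times> R. z e) \<le> \<delta>"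
      using feasible_transfer[OF fin d x'] unfolding \<delta>_def by blast
    have "L \<times> R \<noteq> {}" using x by (auto simp: feasible_def in_simplex_def)
    then have "0 \<le> C" using c by fastforce
    then have "0 \<le> A" using \<mu> M by (auto simp: A_def intro!: add_nonneg_nonneg mult_nonneg_nonneg)
    then have "A * (1 - (\<Sum>e\<in>L \<times> R. z e)) \<le> A * \<delta>"
      by (rule mult_left_mono[OF mass])
    moreover have "OPT L R c \<mu> dL dR \<le> objective L R c \<mu> x"
      using c by (intro OPT_le_objective[OF \<mu> _ x]) auto
    ultimately show ?thesis
      using objective_transfer_le[OF fin \<mu> M c x x' z, of k] by (simp add: A_def \<epsilon>_def)
  qed
  then have "OPT L R c \<mu> dL dR - (A * \<delta> + \<epsilon>) \<le> OPT L R c \<mu> dL' dR'"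
    by (rule le_OPT[OF d(3,4)])
  then show ?thesis by (simp add: A_def \<delta>_def \<epsilon>_def)
qed

lemma mult_two_inverse_power_le:
  fixes M :: real
  assumes "2 \<le> M"
  shows "M * (2 * inverse (M ^ Suc (Suc k))) \<le> inverse (M ^ k)"
proof -
  have "M * (2 * M ^ k) \<le> M * (M * M ^ k)"
    using assms by (intro mult_left_mono mult_right_mono) auto
  then show ?thesis using assms by (simp add: field_simps)
qed

theorem mainTheorem12:
  fixes L :: "'a set" and R :: "'b set"
    and c :: "'a \<times> 'b \<Rightarrow> real" and \<mu> :: real
    and dL dL' :: "'a \<Rightarrow> real" and dR dR' :: "'b \<Rightarrow> real"
  assumes "finite L" "L \<noteq> {}" "finite R" "R \<noteq> {}"
    and "card L * card R \<ge> 3"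
    and "\<mu> \<ge> 0"
    and "\<forall>e\<in>L \<times> R. c e \<ge> 0"
    and "in_simplex L dL" "in_simplex R dR"
    and "in_simplex L dL'" "in_simplex R dR'"
  shows "OPT L R c \<mu> dL dR \<le> OPT L R c \<mu> dL' dR'
      + (2 * (MAX e\<in>L \<times> R. \<bar>c e\<bar>) + 66 * \<mu> * ln (real (card L * card R)))
        * ((\<Sum>i\<in>L. \<bar>dL i - dL' i\<bar>) + (\<Sum>j\<in>R. \<bar>dR j - dR' j\<bar>))
      + \<mu> * inverse (real (card L * card R) ^ 30)"
proof -
  define M where "M = real (card L * card R)"
  define C where "C = (MAX e\<in>L \<times> R. \<bar>c e\<bar>)"
  define \<delta> where "\<delta> = (\<Sum>i\<in>L. \<bar>dL i - dL' i\<bar>) + (\<Sum>j\<in>R. \<bar>dR j - dR' j\<bar>)"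
  have M: "3 \<le> M" unfolding M_def using assms(5) by linarith
  have ln_M: "1 \<le> ln M"
    using M exp_le by (subst ln_ge_iff) auto
  have "\<bar>c e\<bar> \<le> C" if "e \<in> L \<times> R" for e
    using assms(1,3) that by (simp add: C_def)
  then have c: "\<forall>e\<in>L \<times> R. 0 \<le> c e \<and> c e \<le> C"
    using assms(7) by fastforce
  have "0 \<le> C" using c assms(2,4) by fastforce
  have "0 \<le> \<delta>" by (simp add: \<delta>_def sum_nonneg)
  have coefficient: "(C + \<mu> * (1 + 2 * real 32 * ln M)) * \<delta> \<le> (2 * C + 66 * \<mu> * ln M) * \<delta>"
    using mult_left_mono[OF ln_M assms(6)] \<open>0 \<le> C\<close> \<open>0 \<le> \<delta>\<close> assms(6)
    by (intro mult_right_mono) (simp_all add: algebra_simps)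
  have remainder: "\<mu> * M * (2 * inverse (M ^ 32)) \<le> \<mu> * inverse (M ^ 30)"
    using mult_left_mono[OF mult_two_inverse_power_le[of M 30] assms(6)] M
    by (simp add: numeral_eq_Suc mult.assoc)
  have "OPT L R c \<mu> dL dR \<le> OPT L R c \<mu> dL' dR'
      + (C + \<mu> * (1 + 2 * real 32 * ln M)) * \<delta> + \<mu> * M * (2 * inverse (M ^ 32))"
    using OPT_le_OPT_other_marginals[OF assms(1,3,6) _ c assms(8-11), of M 32] M
    by (simp add: \<delta>_def M_def card_cartesian_product)
  with coefficient remainder show ?thesis unfolding M_def C_def \<delta>_def by linarith
qed

end
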